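(* Consider a single end device (node) in the time-slotted uplink system described in the context, with status-update arrival rate $\lambda\in(0,1]$, and put $\gamma=1-\lambda$. Let $k,m$ be positive integers. Suppose that in slot $t$ the node is scheduled and its transmission succeeds, so that the access point (AP) observes the local age $d_t=k$, and suppose that the AP does not successfully receive any packet from this node in any of the slots $t+1,\dots,t+m-1$. Then the destination AoI of the node satisfies $D_{t+m}=k+m$, and the conditional distribution of the local age $d_{t+m}$ given the AP's history of actions and observations (through slot $t+m-1$) is the vector $\bm{c}(k,m)=[c_{k,m}(d)]_{d=1,2,\dots}$ given by $$\bm{c}(k,m)=\left[\lambda,\lambda\gamma,\lambda\gamma^2,\dots,\lambda\gamma^{m-1},0,\dots,0,\gamma^m,0,\dots\right],$$ i.e. $c_{k,m}(d)=\lambda\gamma^{d-1}$ for $1\le d\le m$, $c_{k,m}(k+m)=\gamma^m$, and $c_{k,m}(d)=0$ for all other $d\ge 1$.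
   Context: System model: time is slotted, $t=0,1,2,\dots$. A node receives a new status update in each slot independently with probability $\lambda$ (Bernoulli arrivals) and keeps only the latest one. Its local age $d_t$ (system time of the latest update at the node) evolves as $d_{t+1}=1$ if an update arrives in slot $t$ and $d_{t+1}=d_t+1$ otherwise. In each slot the AP either schedules the node or not; if scheduled, the transmission succeeds with some probability $p\in(0,1]$ independently of everything else. If the node is scheduled and the transmission succeeds in slot $t$, the AP observes $d_t$ and the destination AoI becomes $D_{t+1}=d_t+1$; otherwise the AP observes nothing about $d_t$ and $D_{t+1}=D_t+1$. The AP's scheduling decisions may depend on its past actions and observations, but the AP never observes the arrivals directly. *)

theory Defs
  imports "HOL-Probability.Probability_Mass_Function"
begin

text \<open>The AP's history: for every past slot, the scheduling action (True = scheduled)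
and the observation (Some d = successful reception revealing the local age d,
None = nothing observed).\<close>
type_synonym ap_hist = "(bool \<times> nat option) list"

text \<open>System state at the beginning of a slot: (local age d, destination AoI D, AP history).\<close>
type_synonym sys_state = "nat \<times> nat \<times> ap_hist"

text \<open>The (possibly randomized) policy pol maps the AP's history to
the probability of scheduling the node; the transmission succeeds with probability p,
an update arrives with probability lam; all draws are independent.\<close>
definition slot_step :: "(ap_hist \<Rightarrow> real) \<Rightarrow> real \<Rightarrow> real \<Rightarrow> sys_state \<Rightarrow> sys_state pmf" where
  "slot_step pol lam p st =
     (case st of (d, D, h) \<Rightarrow>
       bind_pmf (bernoulli_pmf (pol h)) (\<lambda>a.
       bind_pmf (bernoulli_pmf p) (\<lambda>s.
       bind_pmf (bernoulli_pmf lam) (\<lambda>arr.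
         return_pmf ((if arr then 1 else d + 1),
                     (if a \<and> s then d + 1 else D + 1),
                     h @ [(a, if a \<and> s then Some d else None)])))))"

primrec sys_dist :: "(ap_hist \<Rightarrow> real) \<Rightarrow> real \<Rightarrow> real \<Rightarrow> (nat \<times> nat) pmf \<Rightarrow> nat \<Rightarrow> sys_state pmf" where
  "sys_dist pol lam p init 0 = map_pmf (\<lambda>(d, D). (d, D, [])) init"
| "sys_dist pol lam p init (Suc n) = bind_pmf (sys_dist pol lam p init n) (slot_step pol lam p)"

definition c_vec :: "real \<Rightarrow> nat \<Rightarrow> nat \<Rightarrow> nat \<Rightarrow> real" where
  "c_vec lam k m d =
     (if 1 \<le> d \<and> d \<le> m then lam * (1 - lam) ^ (d - 1)
      else if d = k + m then (1 - lam) ^ m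
      else 0)"

end

theory Submission
  imports Defs
begin

text \<open>Restrict the joint law of (d, D, history) to the event that the history equals h. A slot
without reception multiplies this restricted law by a weight depending on the history only, and
moves the local age one step of the chain "reset to 1 with probability \<lambda>, else add 1",
independently of what the AP sees; the reception in slot t pins the age to k. Hence after the
m - 1 silent slots the restricted law of (d, D) is a constant times the m-step law of that chain
from k times the point mass at k + m, and normalising leaves the chain's law, which is c(k, m).\<close>

lemma nn_integral_bernoulli_pmf_ennreal:
  assumes "0 \<le> q" "q \<le> 1"
  shows "(\<integral>\<^sup>+x. f x \<partial>bernoulli_pmf q) = ennreal q * f True + ennreal (1 - q) * f False"
  using assms
  by (simp add: nn_integral_measure_pmf nn_integral_count_space_finite UNIV_bool add.commute)

definition age_step :: "real \<Rightarrow> nat \<Rightarrow> nat pmf" where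
  "age_step lam d = map_pmf (\<lambda>arr. if arr then 1 else Suc d) (bernoulli_pmf lam)"

primrec age_chain :: "real \<Rightarrow> nat \<Rightarrow> nat \<Rightarrow> nat pmf" where
  "age_chain lam k 0 = return_pmf k"
| "age_chain lam k (Suc r) = bind_pmf (age_chain lam k r) (age_step lam)"

lemma pmf_age_chain_Suc:
  assumes "0 \<le> lam" "lam \<le> 1"
  shows "pmf (age_chain lam k (Suc r)) x =
    (if x = 1 then lam else 0) + (1 - lam) * (if x = 0 then 0 else pmf (age_chain lam k r) (x - 1))"
proof -
  have shift: "(\<integral>\<^sup>+d. indicator {x} (Suc d) \<partial>age_chain lam k r) =
      ennreal (if x = 0 then 0 else pmf (age_chain lam k r) (x - 1))"
  proof (cases x)
    case (Suc y)
    have "(\<integral>\<^sup>+d. indicator {x} (Suc d) \<partial>age_chain lam k r) =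
        (\<integral>\<^sup>+d. indicator {y} d \<partial>age_chain lam k r)"
      by (rule nn_integral_cong) (simp add: Suc indicator_def)
    then show ?thesis using Suc by (simp add: emeasure_pmf_single)
  qed simp
  have "ennreal (pmf (age_chain lam k (Suc r)) x) = (\<integral>\<^sup>+y. indicator {x} y \<partial>age_chain lam k (Suc r))"
    by (simp add: emeasure_pmf_single del: age_chain.simps)
  also have "\<dots> = ennreal lam * indicator {x} (1::nat)
      + ennreal (1 - lam) * (\<integral>\<^sup>+d. indicator {x} (Suc d) \<partial>age_chain lam k r)"
    using assms
    by (simp add: age_step_def nn_integral_bernoulli_pmf_ennreal mult.commute nn_integral_add
        nn_integral_cmult)
  also have "\<dots> = ennreal ((if x = 1 then lam else 0)
      + (1 - lam) * (if x = 0 then 0 else pmf (age_chain lam k r) (x - 1)))"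
    using assms unfolding shift
    by (simp add: indicator_def ennreal_mult[symmetric] ennreal_plus[symmetric] del: ennreal_plus)
  finally show ?thesis
    using assms by (subst (asm) ennreal_inj) (auto simp del: age_chain.simps)
qed

lemma pmf_age_chain:
  assumes "0 \<le> lam" "lam \<le> 1" "1 \<le> k"
  shows "pmf (age_chain lam k m) d = c_vec lam k m d"
proof (induction m arbitrary: d)
  case 0
  then show ?case using assms by (simp add: c_vec_def)
next
  case (Suc r)
  then show ?case
    unfolding pmf_age_chain_Suc[OF assms(1,2)] using assms
    by (cases d; cases "d - 1") (auto simp: c_vec_def)
qed

lemma nn_integral_slot_step:
  assumes "0 \<le> pol h" "pol h \<le> 1" "0 \<le> lam" "lam \<le> 1" "0 \<le> p" "p \<le> 1"
  shows "(\<integral>\<^sup>+y. F y \<partial>slot_step pol lam p (d, D, h)) =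
     ennreal (pol h) * (ennreal p * (\<integral>\<^sup>+d'. F (d', Suc d, h @ [(True, Some d)]) \<partial>age_step lam d)
                      + ennreal (1 - p) * (\<integral>\<^sup>+d'. F (d', Suc D, h @ [(True, None)]) \<partial>age_step lam d))
   + ennreal (1 - pol h) * (\<integral>\<^sup>+d'. F (d', Suc D, h @ [(False, None)]) \<partial>age_step lam d)"
proof -
  have collapse_p: "ennreal p * X + ennreal (1 - p) * X = X" for X
    using assms by (simp add: distrib_right[symmetric] ennreal_plus[symmetric] del: ennreal_plus)
  show ?thesis
    using assms unfolding slot_step_def age_step_def
    by (simp add: nn_integral_bernoulli_pmf_ennreal mult.commute collapse_p)
qed

definition hist_integral ::
    "(ap_hist \<Rightarrow> real) \<Rightarrow> real \<Rightarrow> real \<Rightarrow> (nat \<times> nat) pmf \<Rightarrow> ap_hist \<Rightarrow>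
      (nat \<Rightarrow> nat \<Rightarrow> ennreal) \<Rightarrow> ennreal" where
  "hist_integral pol lam p init h g =
     (\<integral>\<^sup>+x. (if snd (snd x) = h then g (fst x) (fst (snd x)) else 0)
        \<partial>sys_dist pol lam p init (length h))"

lemma hist_integral_cmult:
  "hist_integral pol lam p init h (\<lambda>d D. c * g d D) = c * hist_integral pol lam p init h g"
  unfolding hist_integral_def by (subst nn_integral_cmult[symmetric]) (auto intro: nn_integral_cong)

lemma hist_integral_multc:
  "hist_integral pol lam p init h (\<lambda>d D. g d D * c) = hist_integral pol lam p init h g * c"
  using hist_integral_cmult[of pol lam p init h c g] by (simp add: mult.commute)

lemma hist_integral_snoc:
  "hist_integral pol lam p init (h @ [e]) g =
     hist_integral pol lam p init h (\<lambda>d D.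
       \<integral>\<^sup>+y. (if snd (snd y) = h @ [e] then g (fst y) (fst (snd y)) else 0)
         \<partial>slot_step pol lam p (d, D, h))"
  unfolding hist_integral_def
  by (auto intro!: nn_integral_cong simp: slot_step_def split: prod.splits)

lemma hist_integral_snoc_no_reception:
  assumes "0 \<le> pol h" "pol h \<le> 1" "0 \<le> lam" "lam \<le> 1" "0 \<le> p" "p \<le> 1"
  shows "hist_integral pol lam p init (h @ [(a, None)]) g =
     ennreal (if a then pol h * (1 - p) else 1 - pol h) *
     hist_integral pol lam p init h (\<lambda>d D. \<integral>\<^sup>+d'. g d' (Suc D) \<partial>age_step lam d)"
  unfolding hist_integral_snoc using assms
  by (cases a) (simp_all add: nn_integral_slot_step ennreal_mult mult.assoc hist_integral_cmult)

lemma hist_integral_snoc_reception: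
  assumes "0 \<le> pol h" "pol h \<le> 1" "0 \<le> lam" "lam \<le> 1" "0 \<le> p" "p \<le> 1"
  shows "hist_integral pol lam p init (h @ [(True, Some k)]) g =
     ennreal (pol h * p) * hist_integral pol lam p init h (\<lambda>d D. if d = k then 1 else 0) *
     (\<integral>\<^sup>+d'. g d' (Suc k) \<partial>age_step lam k)"
proof -
  have "hist_integral pol lam p init (h @ [(True, Some k)]) g =
      hist_integral pol lam p init h (\<lambda>d D. ennreal (pol h * p) *
        ((if d = k then 1 else 0) * (\<integral>\<^sup>+d'. g d' (Suc k) \<partial>age_step lam k)))"
    unfolding hist_integral_snoc using assms
    by (simp add: nn_integral_slot_step ennreal_mult mult.assoc)
       (intro arg_cong[where f = "hist_integral pol lam p init h"] ext, simp)
  then show ?thesis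
    by (simp only: hist_integral_cmult hist_integral_multc mult.assoc)
qed

lemma hist_integral_after_reception:
  assumes pol: "\<And>g. 0 \<le> pol g \<and> pol g \<le> 1"
    and lam: "0 \<le> lam" "lam \<le> 1" and p: "0 \<le> p" "p \<le> 1"
    and silent: "\<forall>e \<in> set rest. snd e = None"
  shows "\<exists>W. \<forall>g. hist_integral pol lam p init (h @ (True, Some k) # rest) g =
           W * (\<integral>\<^sup>+d. g d (k + Suc (length rest)) \<partial>age_chain lam k (Suc (length rest)))"
  using silent
proof (induction rest rule: rev_induct)
  case Nil
  show ?case
    using hist_integral_snoc_reception[of pol h, OF _ _ lam p] pol by (auto simp: bind_return_pmf)
next
  case (snoc e rest)
  then obtain W where W: "\<And>g. hist_integral pol lam p init (h @ (True, Some k) # rest) g =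
      W * (\<integral>\<^sup>+d. g d (k + Suc (length rest)) \<partial>age_chain lam k (Suc (length rest)))"
    by auto
  obtain a where e: "e = (a, None)"
    using snoc.prems by (cases e) auto
  let ?h = "h @ (True, Some k) # rest"
  let ?w = "ennreal (if a then pol ?h * (1 - p) else 1 - pol ?h)"
  have "hist_integral pol lam p init (?h @ [e]) g =
      (?w * W) *
      (\<integral>\<^sup>+d. g d (k + Suc (length (rest @ [e]))) \<partial>age_chain lam k (Suc (length (rest @ [e]))))"
    for g
    using hist_integral_snoc_no_reception[of pol ?h, OF _ _ lam p] pol W by (simp add: e mult.assoc)
  then show ?case
    by auto
qed

lemma conditional_pmf_of_factorization:
  fixes M :: "('a \<times> 'b \<times> 'c) pmf" and Q :: "'a pmf"
  assumes factor: "\<And>g. (\<integral>\<^sup>+x. (if snd (snd x) = h then g (fst x) (fst (snd x)) else 0) \<partial>M) =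
                         W * (\<integral>\<^sup>+a. g a c \<partial>Q)"
  shows "\<forall>x \<in> set_pmf M. snd (snd x) = h \<longrightarrow> fst (snd x) = c"
    and "measure_pmf.prob M {x. fst x = a \<and> snd (snd x) = h} =
         measure_pmf.prob M {x. snd (snd x) = h} * pmf Q a"
proof -
  show "\<forall>x \<in> set_pmf M. snd (snd x) = h \<longrightarrow> fst (snd x) = c"
  proof (intro ballI impI)
    fix x assume x: "x \<in> set_pmf M" and hx: "snd (snd x) = h"
    then obtain b D where xe: "x = (b, D, h)" by (cases x) auto
    have "W * (\<integral>\<^sup>+b'. (if b' = b \<and> c = D then 1 else 0) \<partial>Q) =
        (\<integral>\<^sup>+y. (if snd (snd y) = h then (if fst y = b \<and> fst (snd y) = D then 1 else 0) else 0)
          \<partial>M)"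
      using factor[of "\<lambda>b' D'. if b' = b \<and> D' = D then 1 else 0"] by simp
    also have "\<dots> = (\<integral>\<^sup>+y. indicator {x} y \<partial>M)"
      by (rule nn_integral_cong) (auto simp: xe indicator_def)
    also have "\<dots> = ennreal (pmf M x)"
      by (simp add: emeasure_pmf_single)
    finally show "fst (snd x) = c"
      using x xe by (cases "c = D") (auto simp: set_pmf_iff)
  qed
  have event: "(\<integral>\<^sup>+x. (if snd (snd x) = h then (if P (fst x) then 1 else 0) else 0) \<partial>M) =
      ennreal (measure_pmf.prob M {x. P (fst x) \<and> snd (snd x) = h})" for P
  proof -
    have "(\<integral>\<^sup>+x. (if snd (snd x) = h then (if P (fst x) then 1 else 0) else 0) \<partial>M) =
        (\<integral>\<^sup>+x. indicator {x. P (fst x) \<and> snd (snd x) = h} x \<partial>M)"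
      by (rule nn_integral_cong) (auto simp: indicator_def)
    then show ?thesis
      by (simp add: measure_pmf.emeasure_eq_measure)
  qed
  have "W = ennreal (measure_pmf.prob M {x. snd (snd x) = h})"
    using event[of "\<lambda>_. True"] factor[of "\<lambda>_ _. 1"] by (simp only: if_True) simp
  moreover have
    "ennreal (measure_pmf.prob M {x. fst x = a \<and> snd (snd x) = h}) = W * ennreal (pmf Q a)"
  proof -
    have "ennreal (measure_pmf.prob M {x. fst x = a \<and> snd (snd x) = h}) =
        (\<integral>\<^sup>+x. (if snd (snd x) = h then (if fst x = a then 1 else 0) else 0) \<partial>M)"
      by (rule event[symmetric])
    also have "\<dots> = W * (\<integral>\<^sup>+b. (if b = a then 1 else 0) \<partial>Q)"
      by (rule factor)
    also have "(\<integral>\<^sup>+b. (if b = a then 1 else 0) \<partial>Q) = (\<integral>\<^sup>+b. indicator {a} b \<partial>Q)"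
      by (rule nn_integral_cong) (simp add: indicator_def)
    finally show ?thesis
      by (simp add: emeasure_pmf_single)
  qed
  ultimately show "measure_pmf.prob M {x. fst x = a \<and> snd (snd x) = h} =
      measure_pmf.prob M {x. snd (snd x) = h} * pmf Q a"
    by (simp add: ennreal_mult[symmetric])
qed

theorem proposition1:
  fixes pol :: "ap_hist \<Rightarrow> real" and lam p :: real and init :: "(nat \<times> nat) pmf"
    and t k m :: nat and h :: ap_hist
  assumes pol_prob: "\<And>g. 0 \<le> pol g \<and> pol g \<le> 1"
    and lam: "0 < lam" "lam \<le> 1"
    and p: "0 < p" "p \<le> 1"
    and km: "1 \<le> k" "1 \<le> m"
    and len: "length h = t + m"
    and obs_t: "h ! t = (True, Some k)"
    and no_rx: "\<And>j. t + 1 \<le> j \<Longrightarrow> j < t + m \<Longrightarrow> snd (h ! j) = None"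
    and pos: "measure_pmf.prob (sys_dist pol lam p init (t + m)) {x. snd (snd x) = h} > 0"
  shows "(\<forall>x \<in> set_pmf (sys_dist pol lam p init (t + m)).
            snd (snd x) = h \<longrightarrow> fst (snd x) = k + m)
       \<and> (\<forall>d \<ge> 1.
            measure_pmf.prob (sys_dist pol lam p init (t + m)) {x. fst x = d \<and> snd (snd x) = h}
            / measure_pmf.prob (sys_dist pol lam p init (t + m)) {x. snd (snd x) = h}
            = c_vec lam k m d)"
proof -
  let ?M = "sys_dist pol lam p init (t + m)"
  have lam0: "0 \<le> lam" and p0: "0 \<le> p"
    using lam p by auto
  define rest where "rest = drop (Suc t) h"
  have h_split: "take t h @ (True, Some k) # rest = h"
    using len km obs_t id_take_nth_drop[of t h] by (simp add: rest_def)
  have silent: "\<forall>e \<in> set rest. snd e = None"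
  proof
    fix e assume "e \<in> set rest"
    then obtain i where "i < m - 1" "e = h ! Suc (t + i)"
      using len by (auto simp: rest_def in_set_conv_nth)
    then show "snd e = None"
      using no_rx[of "Suc (t + i)"] by simp
  qed
  have m_eq: "Suc (length rest) = m"
    using len km by (simp add: rest_def)
  obtain W where W:
    "\<And>g. hist_integral pol lam p init h g = W * (\<integral>\<^sup>+d. g d (k + m) \<partial>age_chain lam k m)"
    using hist_integral_after_reception[where pol = pol and init = init and h = "take t h" and k = k,
        OF pol_prob lam0 lam(2) p0 p(2) silent]
    unfolding h_split m_eq by blast
  have factor: "(\<integral>\<^sup>+x. (if snd (snd x) = h then g (fst x) (fst (snd x)) else 0) \<partial>?M) =
      W * (\<integral>\<^sup>+d. g d (k + m) \<partial>age_chain lam k m)" for g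
    using W[of g] len by (simp add: hist_integral_def)
  show ?thesis
    using conditional_pmf_of_factorization[OF factor] pos
    by (simp add: pmf_age_chain[OF lam0 lam(2) km(1)])
qed

end
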